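(* Let $p\geq2$, $n_1,\dots,n_l\geq1$ be integers with $\sum_j p^{-n_j}=1$ and let $T_p$ be the map satisfying Condition 1 with slopes $\Lambda_j=p^{n_j}$. Let $U_\Bbbk$ be a quantization of $T_p$ with respect to the partition of $[0,1]$ into $N_\Bbbk=p^\Bbbk$ equal intervals, let $\psi_\Bbbk$ be a normalized eigenvector of $U_\Bbbk$ and $\mu_\Bbbk$ the associated measure. Let $n_{\mathrm E}=\lfloor\log N_\Bbbk/\log\Lambda_{\max}\rfloor$ and write $n_{\mathrm E}=qn+r$ with integers $q,n\geq1$, $0\leq r<n$. Then $$p_{n_{\mathrm E},v}(\mu_\Bbbk)\leq q\,p_{n,v}(\mu_\Bbbk)+p_{r,v}(\mu_\Bbbk).$$
   Context: Condition 1: $[0,1]$ is divided into consecutive intervals $I_1,\dots,I_l$ with $|I_j|=\Lambda_j^{-1}$ and $T_p$ is affine with slope $\Lambda_j$ on $I_j$ mapping $I_j$ onto $[0,1]$. Let $E_i=[(i-1)/N_\Bbbk,i/N_\Bbbk]$ and $B(i,j)=|E_i\cap T_p^{-1}E_j|/|E_i|$; a quantization is a unitary $U_\Bbbk$ with $B(j,i)=|U_\Bbbk(i,j)|^2$. $\mathrm{Op}_\Bbbk(f)$ is the diagonal matrix with $(i,i)$ entry $N_\Bbbk\int_{E_i}f\,dx$, and $\mu_\Bbbk$ is the probability measure with $\int f\,d\mu_\Bbbk=\langle\psi_\Bbbk,\mathrm{Op}_\Bbbk(f)\psi_\Bbbk\rangle$. For a word $\varepsilon=\varepsilon_0\dots\varepsilon_{n-1}\in\{1,\dots,l\}^n$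 let $[\![\varepsilon]\!]=\bigcap_{i=0}^{n-1}T_p^{-i}I_{\varepsilon_i}$ and $v_\varepsilon=\prod_{i=0}^{n-1}\Lambda_{\varepsilon_i}^{-1/2}$. For a measure $\nu$, the pressure is $p_{n,v}(\nu)=-\sum_{|\varepsilon|=n}\nu([\![\varepsilon]\!])\log\big(v_\varepsilon^2\,\nu([\![\varepsilon]\!])\big)$ (with $0\log0=0$; for $n=0$ it is $0$). *)

theory Defs
  imports "HOL-Analysis.Analysis"
begin

text \<open>Slopes: \<Lambda>_j = p ^ nj j, j = 1..l. Right endpoint of I_j.\<close>
definition aend :: "nat \<Rightarrow> (nat \<Rightarrow> nat) \<Rightarrow> nat \<Rightarrow> real" where
  "aend p nj j = (\<Sum>i\<in>{1..j}. 1 / real p ^ nj i)"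

definition Iv :: "nat \<Rightarrow> (nat \<Rightarrow> nat) \<Rightarrow> nat \<Rightarrow> real set" where
  "Iv p nj j = {aend p nj (j - 1) .. aend p nj j}"

text \<open>The map T_p: affine with slope p^(nj j) on I_j, mapping I_j onto [0,1].
  At the common endpoints of consecutive intervals the half-open convention is used
  (a null set), and T_p 1 = 1.\<close>
definition Tp :: "nat \<Rightarrow> nat \<Rightarrow> (nat \<Rightarrow> nat) \<Rightarrow> real \<Rightarrow> real" where
  "Tp p l nj x =
     (if \<exists>j\<in>{1..l}. aend p nj (j - 1) \<le> x \<and> x < aend p nj j
      then (let j = (LEAST j. j \<in> {1..l} \<and> aend p nj (j - 1) \<le> x \<and> x < aend p nj j)
            in real p ^ nj j * (x - aend p nj (j - 1)))
      else 1)"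

definition Ecell :: "nat \<Rightarrow> nat \<Rightarrow> real set" where
  "Ecell N i = {(real i - 1) / real N .. real i / real N}"

definition Bmat :: "nat \<Rightarrow> nat \<Rightarrow> (nat \<Rightarrow> nat) \<Rightarrow> nat \<Rightarrow> nat \<Rightarrow> nat \<Rightarrow> real" where
  "Bmat p l nj N i j =
     measure lebesgue (Ecell N i \<inter> {x. Tp p l nj x \<in> Ecell N j}) / measure lebesgue (Ecell N i)"

definition is_quantization ::
  "nat \<Rightarrow> nat \<Rightarrow> (nat \<Rightarrow> nat) \<Rightarrow> nat \<Rightarrow> (nat \<Rightarrow> nat \<Rightarrow> complex) \<Rightarrow> bool" where
  "is_quantization p l nj N U \<longleftrightarrow>
     (\<forall>i\<in>{1..N}. \<forall>j\<in>{1..N}.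
        (\<Sum>k\<in>{1..N}. cnj (U k i) * U k j) = (if i = j then 1 else 0)) \<and>
     (\<forall>i\<in>{1..N}. \<forall>j\<in>{1..N}.
        (\<Sum>k\<in>{1..N}. U i k * cnj (U j k)) = (if i = j then 1 else 0)) \<and>
     (\<forall>i\<in>{1..N}. \<forall>j\<in>{1..N}. Bmat p l nj N j i = (cmod (U i j))\<^sup>2)"

definition is_normalized_eigenvector ::
  "nat \<Rightarrow> (nat \<Rightarrow> nat \<Rightarrow> complex) \<Rightarrow> (nat \<Rightarrow> complex) \<Rightarrow> bool" where
  "is_normalized_eigenvector N U \<psi> \<longleftrightarrow>
     (\<Sum>i\<in>{1..N}. (cmod (\<psi> i))\<^sup>2) = 1 \<and>
     (\<exists>c. \<forall>i\<in>{1..N}. (\<Sum>j\<in>{1..N}. U i j * \<psi> j) = c * \<psi> i)"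

text \<open>The measure \<mu>: \<integral> f d\<mu> = \<langle>\<psi>, Op(f) \<psi>\<rangle> = \<Sum>_i |\<psi>_i|^2 N \<integral>_{E_i} f.\<close>
definition mu_of :: "nat \<Rightarrow> (nat \<Rightarrow> complex) \<Rightarrow> real measure" where
  "mu_of N \<psi> = density lborel
     (\<lambda>x. ennreal (\<Sum>i\<in>{1..N}. (cmod (\<psi> i))\<^sup>2 * real N * indicator (Ecell N i) x))"

definition words :: "nat \<Rightarrow> nat \<Rightarrow> nat list set" where
  "words l n = {\<epsilon>. length \<epsilon> = n \<and> set \<epsilon> \<subseteq> {1..l}}"

definition cyl :: "nat \<Rightarrow> nat \<Rightarrow> (nat \<Rightarrow> nat) \<Rightarrow> nat list \<Rightarrow> real set" where
  "cyl p l nj \<epsilon> = (\<Inter>i<length \<epsilon>. (Tp p l nj ^^ i) -` Iv p nj (\<epsilon> ! i))"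

definition vw :: "nat \<Rightarrow> (nat \<Rightarrow> nat) \<Rightarrow> nat list \<Rightarrow> real" where
  "vw p nj \<epsilon> = (\<Prod>i<length \<epsilon>. (real p ^ nj (\<epsilon> ! i)) powr (-1/2))"

definition pressure :: "nat \<Rightarrow> nat \<Rightarrow> (nat \<Rightarrow> nat) \<Rightarrow> real measure \<Rightarrow> nat \<Rightarrow> real" where
  "pressure p l nj \<nu> n =
     - (\<Sum>\<epsilon>\<in>words l n.
          (let m = measure \<nu> (cyl p l nj \<epsilon>)
           in if m = 0 then 0 else m * ln ((vw p nj \<epsilon>)\<^sup>2 * m)))"

end

theory Submission
  imports Defs
begin

text \<open>
  Let \<open>M = max n\<^sub>j\<close>, so \<open>n\<^sub>E = k div M\<close>. For \<open>t \<ge> M\<close> the map \<open>T\<close> sends each open \<open>p\<close>-adic cell of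
  level \<open>t\<close> affinely onto a cell of level \<open>t - n\<^sub>j\<close>; hence for words of length \<open>m \<le> n\<^sub>E\<close> every
  cylinder is, up to endpoints, a union of the \<open>N = p\<^sup>k\<close> cells, and its \<open>\<mu>\<^sub>k\<close>-mass is a sum of
  values \<open>|\<psi>\<^sub>i|\<^sup>2\<close>. These masses are consistent under adding a letter on the right (refinement)
  and on the left (\<open>T\<close>-invariance). The latter holds because \<open>U\<close> maps the cells whose image lies
  in the cylinder into the cells inside it and the other cells into the other cells, so the
  eigenvector \<open>\<psi>\<close> carries the same mass on both blocks. For any such consistent family of weights,
  \<open>ln x \<le> x - 1\<close> gives \<open>p\<^sub>a\<^sub>+\<^sub>b \<le> p\<^sub>a + p\<^sub>b\<close> whenever \<open>a + b \<le> n\<^sub>E\<close>, and iterating proves the claim.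
\<close>

section \<open>Words and the pressure of consistent word weights\<close>

lemma finite_words: "finite (words l n)"
proof -
  have "words l n \<subseteq> {xs. set xs \<subseteq> {1..l} \<and> length xs = n}" unfolding words_def by auto
  then show ?thesis using finite_lists_length_eq[of "{1..l}" n] finite_subset by auto
qed

lemma words_0: "words l 0 = {[]}"
  by (auto simp: words_def)

lemma Cons_in_words_Suc: "j # e \<in> words l (Suc m) \<longleftrightarrow> j \<in> {1..l} \<and> e \<in> words l m"
  by (auto simp: words_def)

lemma append_in_words: "e \<in> words l a \<Longrightarrow> e' \<in> words l b \<Longrightarrow> e @ e' \<in> words l (a + b)"
  by (auto simp: words_def)

lemma sum_words_append:
  "(\<Sum>x\<in>words l (a + b). f x) = (\<Sum>e\<in>words l a. \<Sum>e'\<in>words l b. f (e @ e'))"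
proof -
  have inj: "inj_on (\<lambda>(e, e'). e @ e') (words l a \<times> words l b)"
    by (auto simp: inj_on_def words_def)
  have img: "words l (a + b) = (\<lambda>(e, e'). e @ e') ` (words l a \<times> words l b)"
  proof (intro equalityI subsetI)
    fix x assume "x \<in> words l (a + b)"
    then have "(take a x, drop a x) \<in> words l a \<times> words l b"
      by (auto simp: words_def dest: in_set_takeD in_set_dropD)
    then show "x \<in> (\<lambda>(e, e'). e @ e') ` (words l a \<times> words l b)"
      by (auto intro!: image_eqI[where x = "(take a x, drop a x)"])
  qed (force simp: words_def)
  have "(\<Sum>x\<in>words l (a + b). f x) = (\<Sum>(e, e')\<in>words l a \<times> words l b. f (e @ e'))"
    unfolding img by (subst sum.reindex[OF inj]) (simp add: case_prod_unfold)
  then show ?thesis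
    by (simp add: sum.cartesian_product)
qed

lemma words_Suc_0: "words l (Suc 0) = (\<lambda>j. [j]) ` {1..l}"
  by (auto simp: words_def length_Suc_conv)

lemma sum_words_Cons:
  "(\<Sum>x\<in>words l (Suc a). f x) = (\<Sum>j\<in>{1..l}. \<Sum>e\<in>words l a. f (j # e))"
  using sum_words_append[of f l 1 a] by (simp add: words_Suc_0 sum.reindex inj_on_def)

lemma sum_words_snoc:
  "(\<Sum>x\<in>words l (Suc a). f x) = (\<Sum>e\<in>words l a. \<Sum>j\<in>{1..l}. f (e @ [j]))"
  using sum_words_append[of f l a 1] by (simp add: words_Suc_0 sum.reindex inj_on_def)

definition word_pressure :: "nat \<Rightarrow> (nat list \<Rightarrow> real) \<Rightarrow> (nat list \<Rightarrow> real) \<Rightarrow> nat \<Rightarrow> real" where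
  "word_pressure l F v n = - (\<Sum>e\<in>words l n. F e * ln ((v e)\<^sup>2 * F e))"

text \<open>The convention \<open>0 log 0 = 0\<close> of the pressure is automatic here, since \<open>0 * ln _ = 0\<close>.\<close>
lemma pressure_eq_word_pressure:
  "pressure p l nj \<nu> n = word_pressure l (\<lambda>e. measure \<nu> (cyl p l nj e)) (vw p nj) n"
  unfolding pressure_def word_pressure_def Let_def by (intro arg_cong[where f = uminus] sum.cong) auto

lemma vw_Cons: "vw p nj (j # e) = (real p ^ nj j) powr (-1/2) * vw p nj e"
  unfolding vw_def by (simp only: length_Cons prod.lessThan_Suc_shift nth_Cons_0 nth_Cons_Suc)

lemma vw_append: "vw p nj (e @ e') = vw p nj e * vw p nj e'"
  by (induction e) (simp_all add: vw_Cons, simp add: vw_def)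

lemma vw_pos: "p > 0 \<Longrightarrow> vw p nj e > 0"
  unfolding vw_def by (intro prod_pos) simp

lemma mult_ln_le_cross:
  fixes x y z V W :: real
  assumes "0 \<le> x" "x \<le> y" "x \<le> z" "0 < V" "0 < W"
  shows "x * ln (V\<^sup>2 * y) + x * ln (W\<^sup>2 * z) - x * ln ((V * W)\<^sup>2 * x) \<le> y * z - x"
proof (cases "x = 0")
  case True
  with assms show ?thesis by simp
next
  case False
  with assms have pos: "0 < x" "0 < y" "0 < z" by auto
  with assms have "x * ln (V\<^sup>2 * y) + x * ln (W\<^sup>2 * z) - x * ln ((V * W)\<^sup>2 * x)
      = x * ln (y * z / x)"
    by (simp add: ln_mult ln_div power_mult_distrib algebra_simps)
  also have "\<dots> \<le> x * (y * z / x - 1)"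
    using pos by (intro mult_left_mono ln_le_minus_one) auto
  also have "\<dots> = y * z - x"
    using pos by (simp add: field_simps)
  finally show ?thesis .
qed

locale stationary_word_weights =
  fixes l L :: nat and F :: "nat list \<Rightarrow> real"
  assumes nonneg: "F e \<ge> 0"
    and Nil: "F [] = 1"
    and sum_snoc: "e \<in> words l m \<Longrightarrow> m < L \<Longrightarrow> (\<Sum>j\<in>{1..l}. F (e @ [j])) = F e"
    and sum_Cons: "e \<in> words l m \<Longrightarrow> m < L \<Longrightarrow> (\<Sum>j\<in>{1..l}. F (j # e)) = F e"
begin

lemma sum_prefixes:
  assumes "e' \<in> words l b" "a + b \<le> L"
  shows "(\<Sum>e\<in>words l a. F (e @ e')) = F e'"
  using assms(2)
proof (induction a)
  case 0
  then show ?case by (simp add: words_0)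
next
  case (Suc a)
  have "(\<Sum>x\<in>words l (Suc a). F (x @ e')) = (\<Sum>e\<in>words l a. \<Sum>j\<in>{1..l}. F (j # e @ e'))"
    by (simp add: sum_words_Cons) (rule sum.swap)
  also have "\<dots> = (\<Sum>e\<in>words l a. F (e @ e'))"
    using Suc.prems assms(1) by (intro sum.cong refl sum_Cons[where m = "a + b"] append_in_words) auto
  also have "\<dots> = F e'"
    using Suc by simp
  finally show ?case .
qed

lemma sum_suffixes:
  assumes "e \<in> words l a" "a + b \<le> L"
  shows "(\<Sum>e'\<in>words l b. F (e @ e')) = F e"
  using assms(2)
proof (induction b)
  case 0
  then show ?case by (simp add: words_0)
next
  case (Suc b)
  have "(\<Sum>x\<in>words l (Suc b). F (e @ x)) = (\<Sum>e'\<in>words l b. \<Sum>j\<in>{1..l}. F ((e @ e') @ [j]))"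
    by (simp add: sum_words_snoc)
  also have "\<dots> = (\<Sum>e'\<in>words l b. F (e @ e'))"
    using Suc.prems assms(1) by (intro sum.cong refl sum_snoc[where m = "a + b"] append_in_words) auto
  also have "\<dots> = F e"
    using Suc by simp
  finally show ?case .
qed

lemma sum_words_eq_1: "n \<le> L \<Longrightarrow> (\<Sum>e\<in>words l n. F e) = 1"
  using sum_suffixes[of "[]" 0 n] by (simp add: words_0 Nil)

lemma word_pressure_subadditive:
  assumes ab: "a + b \<le> L"
    and v_pos: "\<And>e. v e > 0" and v_append: "\<And>e e'. v (e @ e') = v e * v e'"
  shows "word_pressure l F v (a + b) \<le> word_pressure l F v a + word_pressure l F v b"
proof -
  let ?S = "\<lambda>n. \<Sum>e\<in>words l n. F e * ln ((v e)\<^sup>2 * F e)"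
  let ?T = "\<lambda>e e'. F (e @ e') * ln ((v e)\<^sup>2 * F e) + F (e @ e') * ln ((v e')\<^sup>2 * F e')
                   - F (e @ e') * ln ((v e * v e')\<^sup>2 * F (e @ e'))"
  have Sa: "?S a = (\<Sum>e\<in>words l a. \<Sum>e'\<in>words l b. F (e @ e') * ln ((v e)\<^sup>2 * F e))"
    using sum_suffixes[OF _ ab] by (simp add: sum_distrib_right[symmetric])
  have Sb: "?S b = (\<Sum>e\<in>words l a. \<Sum>e'\<in>words l b. F (e @ e') * ln ((v e')\<^sup>2 * F e'))"
  proof -
    have "?S b = (\<Sum>e'\<in>words l b. \<Sum>e\<in>words l a. F (e @ e') * ln ((v e')\<^sup>2 * F e'))"
      using sum_prefixes[OF _ ab] by (simp add: sum_distrib_right[symmetric])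
    then show ?thesis
      by (simp add: sum.swap[of _ "words l b"])
  qed
  have Sab: "?S (a + b) = (\<Sum>e\<in>words l a. \<Sum>e'\<in>words l b. F (e @ e') * ln ((v e * v e')\<^sup>2 * F (e @ e')))"
    by (simp add: sum_words_append v_append)
  have T_le: "?T e e' \<le> F e * F e' - F (e @ e')" if "e \<in> words l a" "e' \<in> words l b" for e e'
  proof (rule mult_ln_le_cross[OF nonneg _ _ v_pos v_pos])
    show "F (e @ e') \<le> F e"
      using member_le_sum[OF that(2), of "\<lambda>x. F (e @ x)"] sum_suffixes[OF that(1) ab]
      by (simp add: nonneg finite_words)
    show "F (e @ e') \<le> F e'"
      using member_le_sum[OF that(1), of "\<lambda>x. F (x @ e')"] sum_prefixes[OF that(2) ab]
      by (simp add: nonneg finite_words)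
  qed
  have "?S a + ?S b - ?S (a + b) = (\<Sum>e\<in>words l a. \<Sum>e'\<in>words l b. ?T e e')"
    unfolding Sa Sb Sab by (simp add: sum_subtractf sum.distrib)
  also have "\<dots> \<le> (\<Sum>e\<in>words l a. \<Sum>e'\<in>words l b. F e * F e' - F (e @ e'))"
    using T_le by (intro sum_mono) auto
  also have "\<dots> = 0"
    using ab sum_suffixes[OF _ ab]
    by (simp add: sum_subtractf sum_distrib_left[symmetric] sum_words_eq_1)
  finally show ?thesis
    by (simp add: word_pressure_def)
qed

lemma word_pressure_iterate:
  assumes "q * n + r \<le> L"
    and "\<And>e. v e > 0" and "\<And>e e'. v (e @ e') = v e * v e'"
  shows "word_pressure l F v (q * n + r) \<le> real q * word_pressure l F v n + word_pressure l F v r"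
  using assms(1)
proof (induction q)
  case 0
  then show ?case by simp
next
  case (Suc q)
  have "word_pressure l F v (Suc q * n + r) \<le> word_pressure l F v n + word_pressure l F v (q * n + r)"
    using word_pressure_subadditive[of n "q * n + r", OF _ assms(2,3)] Suc.prems
    by (simp add: add.assoc)
  with Suc show ?case
    by (simp add: algebra_simps)
qed

end

section \<open>Eigenvectors of unitary matrices\<close>

lemma sum_cmod_sq_unitary_mult:
  fixes U :: "nat \<Rightarrow> nat \<Rightarrow> complex" and \<phi> :: "nat \<Rightarrow> complex"
  assumes orth: "\<forall>i\<in>{1..N}. \<forall>j\<in>{1..N}. (\<Sum>k\<in>{1..N}. cnj (U k i) * U k j) = (if i = j then 1 else 0)"
  shows "(\<Sum>i\<in>{1..N}. (cmod (\<Sum>c\<in>{1..N}. U i c * \<phi> c))\<^sup>2) = (\<Sum>c\<in>{1..N}. (cmod (\<phi> c))\<^sup>2)"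
proof -
  have "complex_of_real (\<Sum>i\<in>{1..N}. (cmod (\<Sum>c\<in>{1..N}. U i c * \<phi> c))\<^sup>2)
      = (\<Sum>i\<in>{1..N}. (\<Sum>c\<in>{1..N}. U i c * \<phi> c) * cnj (\<Sum>d\<in>{1..N}. U i d * \<phi> d))"
    by (simp only: of_real_sum complex_norm_square)
  also have "\<dots> = (\<Sum>i\<in>{1..N}. \<Sum>c\<in>{1..N}. \<Sum>d\<in>{1..N}. (U i c * \<phi> c) * (cnj (U i d) * cnj (\<phi> d)))"
    by (simp add: sum_product)
  also have "\<dots> = (\<Sum>c\<in>{1..N}. \<Sum>d\<in>{1..N}. \<Sum>i\<in>{1..N}. (U i c * \<phi> c) * (cnj (U i d) * cnj (\<phi> d)))"
    by (subst sum.swap) (subst (2) sum.swap, rule refl)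
  also have "\<dots> = (\<Sum>c\<in>{1..N}. \<Sum>d\<in>{1..N}. \<phi> c * cnj (\<phi> d) * (\<Sum>i\<in>{1..N}. cnj (U i d) * U i c))"
    by (simp add: sum_distrib_left mult_ac)
  also have "\<dots> = (\<Sum>c\<in>{1..N}. \<Sum>d\<in>{1..N}. \<phi> c * cnj (\<phi> d) * (if d = c then 1 else 0))"
    using orth by (intro sum.cong refl) simp
  also have "\<dots> = (\<Sum>c\<in>{1..N}. \<phi> c * cnj (\<phi> c))"
    by (simp add: if_distrib sum.delta cong: if_cong)
  also have "\<dots> = complex_of_real (\<Sum>c\<in>{1..N}. (cmod (\<phi> c))\<^sup>2)"
    by (simp only: of_real_sum complex_norm_square)
  finally show ?thesis
    by (simp only: of_real_eq_iff)
qed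

lemma eigenvector_mass_block:
  fixes U :: "nat \<Rightarrow> nat \<Rightarrow> complex" and \<psi> :: "nat \<Rightarrow> complex"
  assumes orth: "\<forall>i\<in>{1..N}. \<forall>j\<in>{1..N}. (\<Sum>k\<in>{1..N}. cnj (U k i) * U k j) = (if i = j then 1 else 0)"
    and eig: "is_normalized_eigenvector N U \<psi>"
    and A: "A \<subseteq> {1..N}" and B: "B \<subseteq> {1..N}"
    and from_B: "\<And>i c. i \<in> {1..N} - A \<Longrightarrow> c \<in> B \<Longrightarrow> U i c = 0"
    and into_A: "\<And>i c. i \<in> A \<Longrightarrow> c \<in> {1..N} - B \<Longrightarrow> U i c = 0"
  shows "(\<Sum>i\<in>A. (cmod (\<psi> i))\<^sup>2) = (\<Sum>c\<in>B. (cmod (\<psi> c))\<^sup>2)"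
proof -
  obtain z where ev: "\<And>i. i \<in> {1..N} \<Longrightarrow> (\<Sum>c\<in>{1..N}. U i c * \<psi> c) = z * \<psi> i"
    using eig unfolding is_normalized_eigenvector_def by blast
  have norm1: "(\<Sum>i\<in>{1..N}. (cmod (\<psi> i))\<^sup>2) = 1"
    using eig unfolding is_normalized_eigenvector_def by simp
  have "(cmod z)\<^sup>2 = (\<Sum>i\<in>{1..N}. (cmod (\<Sum>c\<in>{1..N}. U i c * \<psi> c))\<^sup>2)"
    using ev norm1 by (simp add: norm_mult power_mult_distrib sum_distrib_left[symmetric])
  then have "(cmod z)\<^sup>2 = 1"
    using norm1 sum_cmod_sq_unitary_mult[OF orth] by simp
  then have unimodular: "cmod z = 1"
    using norm_ge_zero[of z] by (auto simp: power2_eq_1_iff)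
  define \<phi> where "\<phi> c = (if c \<in> B then \<psi> c else 0)" for c
  have on_A: "(\<Sum>c\<in>{1..N}. U i c * \<psi> c) = (\<Sum>c\<in>{1..N}. U i c * \<phi> c)" if "i \<in> A" for i
    using into_A[OF that] by (intro sum.cong) (auto simp: \<phi>_def)
  have off_A: "(\<Sum>c\<in>{1..N}. U i c * \<phi> c) = 0" if "i \<in> {1..N} - A" for i
    using from_B[OF that] by (intro sum.neutral) (auto simp: \<phi>_def)
  have "(\<Sum>i\<in>A. (cmod (\<psi> i))\<^sup>2) = (\<Sum>i\<in>A. (cmod (\<Sum>c\<in>{1..N}. U i c * \<psi> c))\<^sup>2)"
    using A ev unimodular by (intro sum.cong) (auto simp: norm_mult)
  also have "\<dots> = (\<Sum>i\<in>{1..N}. (cmod (\<Sum>c\<in>{1..N}. U i c * \<phi> c))\<^sup>2)"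
    using A on_A off_A by (intro sum.mono_neutral_cong_left) auto
  also have "\<dots> = (\<Sum>c\<in>{1..N}. (cmod (\<phi> c))\<^sup>2)"
    by (rule sum_cmod_sq_unitary_mult[OF orth])
  also have "\<dots> = (\<Sum>c\<in>B. (cmod (\<psi> c))\<^sup>2)"
    using B by (intro sum.mono_neutral_cong_right) (auto simp: \<phi>_def)
  finally show ?thesis .
qed

section \<open>The measure of a union of cells\<close>

lemma emeasure_Icc_Int_of_Ioo_subset:
  fixes lo hi :: real
  assumes "lo \<le> hi" "S \<in> sets borel" "{lo<..<hi} \<subseteq> S"
  shows "emeasure lborel ({lo..hi} \<inter> S) = ennreal (hi - lo)"
proof (rule antisym)
  show "emeasure lborel ({lo..hi} \<inter> S) \<le> ennreal (hi - lo)"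
    using emeasure_mono[of "{lo..hi} \<inter> S" "{lo..hi}" lborel] assms(1) by simp
  have "emeasure lborel {lo<..<hi} \<le> emeasure lborel ({lo..hi} \<inter> S)"
    using assms by (intro emeasure_mono) auto
  then show "ennreal (hi - lo) \<le> emeasure lborel ({lo..hi} \<inter> S)"
    using assms(1) by simp
qed

lemma emeasure_Icc_Int_of_Ioo_disjoint:
  fixes lo hi :: real
  assumes "{lo<..<hi} \<inter> S = {}"
  shows "emeasure lborel ({lo..hi} \<inter> S) = 0"
proof -
  have "{lo..hi} \<inter> S \<subseteq> {lo, hi}"
    using assms by (auto simp: disjoint_iff less_le)
  then have "emeasure lborel ({lo..hi} \<inter> S) \<le> emeasure lborel {lo, hi}"
    by (intro emeasure_mono) auto
  also have "\<dots> = 0"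
    by (rule emeasure_lborel_countable) simp
  finally show ?thesis
    by simp
qed

lemma emeasure_mu_of:
  assumes S: "S \<in> sets borel"
  shows "emeasure (mu_of N \<psi>) S
    = (\<Sum>i\<in>{1..N}. ennreal ((cmod (\<psi> i))\<^sup>2 * real N) * emeasure lborel (Ecell N i \<inter> S))"
proof -
  define c where "c i = (cmod (\<psi> i))\<^sup>2 * real N" for i
  have c_nonneg: "c i \<ge> 0" for i
    by (simp add: c_def)
  have Ecell_Int[measurable]: "Ecell N i \<inter> S \<in> sets borel" for i
    using S by (simp add: Ecell_def)
  have "emeasure (mu_of N \<psi>) S
      = (\<integral>\<^sup>+ x. ennreal (\<Sum>i\<in>{1..N}. c i * indicator (Ecell N i) x) * indicator S x \<partial>lborel)"
    unfolding mu_of_def c_def using S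
    by (subst emeasure_density) (auto simp: Ecell_def mult.assoc)
  also have "\<dots> = (\<integral>\<^sup>+ x. (\<Sum>i\<in>{1..N}. ennreal (c i) * indicator (Ecell N i \<inter> S) x) \<partial>lborel)"
    by (intro nn_integral_cong)
      (auto simp: c_nonneg sum_ennreal[symmetric] ennreal_mult' indicator_def sum_distrib_right
        simp del: sum_ennreal)
  also have "\<dots> = (\<Sum>i\<in>{1..N}. ennreal (c i) * emeasure lborel (Ecell N i \<inter> S))"
    by (subst nn_integral_sum) (auto intro!: sum.cong nn_integral_cmult_indicator simp: Ecell_Int)
  finally show ?thesis
    by (simp add: c_def)
qed

lemma measure_lebesgue_subset_finite:
  fixes A :: "real set"
  assumes "A \<subseteq> B" "finite B"
  shows "measure lebesgue A = 0"
proof -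
  have "B \<in> null_sets (completion lborel)"
    using assms(2) null_sets_completion_iff[of B lborel] finite_imp_null_set_lborel[of B]
    by (simp add: borel_closed finite_imp_closed)
  then show ?thesis
    by (intro measure_eq_0_null_sets null_sets_completion_subset[OF assms(1)])
qed

lemma measure_mu_of_cell_union:
  fixes N :: nat and S :: "real set"
  defines "cell i \<equiv> {(real i - 1) / real N <..< real i / real N}"
  assumes N: "N > 0" and S: "S \<in> sets borel"
    and dichotomy: "\<And>i. i \<in> {1..N} \<Longrightarrow> cell i \<subseteq> S \<or> cell i \<inter> S = {}"
  shows "measure (mu_of N \<psi>) S = (\<Sum>i\<in>{i\<in>{1..N}. cell i \<subseteq> S}. (cmod (\<psi> i))\<^sup>2)"
proof -
  have cell_term: "ennreal ((cmod (\<psi> i))\<^sup>2 * real N) * emeasure lborel (Ecell N i \<inter> S)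
      = ennreal (if cell i \<subseteq> S then (cmod (\<psi> i))\<^sup>2 else 0)" if i: "i \<in> {1..N}" for i
  proof (cases "cell i \<subseteq> S")
    case True
    have "emeasure lborel (Ecell N i \<inter> S) = ennreal (real i / real N - (real i - 1) / real N)"
      using True N S unfolding Ecell_def cell_def
      by (intro emeasure_Icc_Int_of_Ioo_subset) (auto simp: divide_right_mono)
    also have "real i / real N - (real i - 1) / real N = 1 / real N"
      by (simp add: diff_divide_distrib)
    finally show ?thesis
      using True N by (simp add: ennreal_mult'[symmetric])
  next
    case False
    then have "emeasure lborel (Ecell N i \<inter> S) = 0"
      using dichotomy[OF i] unfolding Ecell_def cell_def by (intro emeasure_Icc_Int_of_Ioo_disjoint) auto
    with False show ?thesis
      by simp
  qed
  have "emeasure (mu_of N \<psi>) S = (\<Sum>i\<in>{1..N}. ennreal (if cell i \<subseteq> S then (cmod (\<psi> i))\<^sup>2 else 0))"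
    using cell_term by (simp add: emeasure_mu_of[OF S])
  also have "\<dots> = ennreal (\<Sum>i\<in>{i\<in>{1..N}. cell i \<subseteq> S}. (cmod (\<psi> i))\<^sup>2)"
    by (simp add: sum_ennreal sum.If_cases Int_def)
  finally show ?thesis
    by (simp add: measure_def sum_nonneg)
qed

section \<open>The map and its cylinders\<close>

lemma affine_image_Ioo:
  fixes c x0 lo hi :: real
  assumes "c > 0"
  shows "(\<lambda>x. c * (x - x0)) ` {lo<..<hi} = {c * (lo - x0)<..<c * (hi - x0)}"
proof (intro equalityI subsetI)
  fix y assume y: "y \<in> {c * (lo - x0)<..<c * (hi - x0)}"
  have "y = c * ((x0 + y / c) - x0)" and "x0 + y / c \<in> {lo<..<hi}"
    using y assms by (auto simp: field_simps)
  then show "y \<in> (\<lambda>x. c * (x - x0)) ` {lo<..<hi}"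
    by blast
qed (use assms in auto)

locale full_branch_map =
  fixes p l :: nat and nj :: "nat \<Rightarrow> nat"
  assumes p_ge_2: "p \<ge> 2" and l_pos: "l \<ge> 1"
    and nj_pos: "\<forall>j\<in>{1..l}. nj j \<ge> 1"
    and branch_lengths_sum: "(\<Sum>j\<in>{1..l}. 1 / real p ^ nj j) = 1"
begin

abbreviation "a \<equiv> aend p nj"
abbreviation "T \<equiv> Tp p l nj"

definition nmax :: nat where
  "nmax = Max (nj ` {1..l})"

lemma nj_le_nmax: "j \<in> {1..l} \<Longrightarrow> nj j \<le> nmax"
  unfolding nmax_def by (intro Max_ge) auto

lemma nmax_pos: "nmax \<ge> 1"
  using nj_le_nmax[of 1] nj_pos l_pos by force

lemma p_pos: "real p > 0"
  using p_ge_2 by simp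

lemma aend_0: "a 0 = 0"
  by (simp add: aend_def)

lemma aend_Suc: "a (Suc j) = a j + 1 / real p ^ nj (Suc j)"
  by (simp add: aend_def)

lemma aend_last: "a l = 1"
  using branch_lengths_sum by (simp add: aend_def)

lemma aend_strict_mono: "i < j \<Longrightarrow> a i < a j"
proof (induction j)
  case (Suc j)
  have "a j < a (Suc j)"
    using p_pos by (simp add: aend_Suc)
  with Suc show ?case
    by (cases "i = j") auto
qed simp

lemma aend_mono: "i \<le> j \<Longrightarrow> a i \<le> a j"
  using aend_strict_mono by (cases "i = j") (auto simp: le_less)

lemma aend_grid:
  assumes j: "j \<in> {1..l}" and t: "nmax \<le> t"
  obtains B :: nat where "a (j - 1) * real p ^ t = real B"
    and "a j * real p ^ t = real B + real p ^ (t - nj j)"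
proof -
  have nat_scaled: "a i * real p ^ t = real (\<Sum>i'\<in>{1..i}. p ^ (t - nj i'))" if "i \<le> l" for i
  proof -
    have "a i * real p ^ t = (\<Sum>i'\<in>{1..i}. real p ^ t / real p ^ nj i')"
      by (simp add: aend_def sum_distrib_right)
    also have "\<dots> = (\<Sum>i'\<in>{1..i}. real p ^ (t - nj i'))"
    proof (intro sum.cong refl)
      fix i' assume "i' \<in> {1..i}"
      then have "nj i' \<le> t"
        using that t nj_le_nmax[of i'] by auto
      then show "real p ^ t / real p ^ nj i' = real p ^ (t - nj i')"
        using p_pos by (simp add: power_diff)
    qed
    finally show ?thesis
      by simp
  qed
  have "a j = a (j - 1) + 1 / real p ^ nj j"
    using aend_Suc[of "j - 1"] j by simp
  moreover have "real p ^ t / real p ^ nj j = real p ^ (t - nj j)"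
    using t nj_le_nmax[OF j] p_pos by (simp add: power_diff)
  ultimately have step: "a j * real p ^ t = a (j - 1) * real p ^ t + real p ^ (t - nj j)"
    by (simp add: distrib_right)
  define B where "B = (\<Sum>i'\<in>{1..j - 1}. p ^ (t - nj i'))"
  have B: "a (j - 1) * real p ^ t = real B"
    unfolding B_def using j by (intro nat_scaled) auto
  show ?thesis
    using step B by (intro that[OF B]) (simp only:)
qed

lemma branch_unique:
  assumes "j \<in> {1..l}" "a (j - 1) \<le> x" "x < a j" "j' \<in> {1..l}" "a (j' - 1) \<le> x" "x < a j'"
  shows "j' = j"
proof (rule ccontr)
  assume "j' \<noteq> j"
  then consider "j' < j" | "j < j'"
    by linarith
  then show False
  proof cases
    case 1
    then have "a j' \<le> a (j - 1)" by (intro aend_mono) auto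
    with assms show ?thesis by linarith
  next
    case 2
    then have "a j \<le> a (j' - 1)" by (intro aend_mono) auto
    with assms show ?thesis by linarith
  qed
qed

lemma branch_exists:
  assumes "0 \<le> x" "x < 1"
  obtains j where "j \<in> {1..l}" "a (j - 1) \<le> x" "x < a j"
proof -
  define j where "j = (LEAST j. x < a j)"
  have "x < a l"
    using assms aend_last by simp
  then have "j \<le> l" "x < a j"
    unfolding j_def by (auto intro: Least_le LeastI)
  moreover have "j \<noteq> 0"
  proof
    assume "j = 0"
    then show False
      using \<open>x < a j\<close> assms aend_0 by simp
  qed
  moreover have "\<not> x < a (j - 1)"
    unfolding j_def by (rule not_less_Least) (use \<open>j \<noteq> 0\<close> in \<open>simp add: j_def[symmetric]\<close>)
  ultimately show ?thesis
    by (intro that[of j]) auto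
qed

lemma branch_in_unit_interval:
  assumes "j \<in> {1..l}" "a (j - 1) \<le> x" "x < a j"
  shows "0 \<le> x \<and> x < 1"
  using assms aend_mono[of 0 "j - 1"] aend_mono[of j l] aend_0 aend_last by auto

lemma Tp_on_branch:
  assumes j: "j \<in> {1..l}" and x: "a (j - 1) \<le> x" "x < a j"
  shows "T x = real p ^ nj j * (x - a (j - 1))"
proof -
  have least: "(LEAST j. j \<in> {1..l} \<and> a (j - 1) \<le> x \<and> x < a j) = j"
  proof (rule Least_equality)
    show "j \<in> {1..l} \<and> a (j - 1) \<le> x \<and> x < a j"
      using j x by blast
  qed (use branch_unique[OF j x] in blast)
  have "\<exists>j\<in>{1..l}. a (j - 1) \<le> x \<and> x < a j"
    using j x by blast
  then have "T x = (let j = (LEAST j. j \<in> {1..l} \<and> a (j - 1) \<le> x \<and> x < a j)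
                     in real p ^ nj j * (x - a (j - 1)))"
    unfolding Tp_def by (rule if_P)
  then show ?thesis
    unfolding least Let_def .
qed

lemma Tp_outside_branches:
  assumes "\<not> (0 \<le> x \<and> x < 1)"
  shows "T x = 1"
proof -
  have "\<not> (\<exists>j\<in>{1..l}. a (j - 1) \<le> x \<and> x < a j)"
    using assms branch_in_unit_interval by blast
  then show ?thesis
    unfolding Tp_def by (rule if_not_P)
qed

lemma Tp_measurable: "T \<in> borel_measurable borel"
proof -
  let ?branch = "\<lambda>x j. indicator {a (j - 1)..<a j} x * (real p ^ nj j * (x - a (j - 1)))"
  have "T x = (\<Sum>j\<in>{1..l}. ?branch x j) + indicator (- {0..<1}) x" for x
  proof (cases "0 \<le> x \<and> x < 1")
    case True
    then obtain j where j: "j \<in> {1..l}" "a (j - 1) \<le> x" "x < a j"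
      using branch_exists by blast
    have "?branch x j' = (if j' = j then real p ^ nj j * (x - a (j - 1)) else 0)"
      if "j' \<in> {1..l}" for j'
    proof (cases "j' = j")
      case False
      then have "x \<notin> {a (j' - 1)..<a j'}"
        using branch_unique[OF j that] by auto
      with False show ?thesis
        by simp
    qed (use j in simp)
    then have "(\<Sum>j\<in>{1..l}. ?branch x j) = (\<Sum>j'\<in>{1..l}. if j' = j then real p ^ nj j * (x - a (j - 1)) else 0)"
      by (rule sum.cong[OF refl])
    also have "\<dots> = real p ^ nj j * (x - a (j - 1))"
      using j(1) by simp
    finally have "(\<Sum>j\<in>{1..l}. ?branch x j) = real p ^ nj j * (x - a (j - 1))" .
    then show ?thesis
      using True Tp_on_branch[OF j] by simp
  next
    case False
    then have "x \<notin> {a (j - 1)..<a j}" if "j \<in> {1..l}" for j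
      using branch_in_unit_interval[OF that] by auto
    then have "?branch x j = 0" if "j \<in> {1..l}" for j
      using that by simp
    then have "(\<Sum>j\<in>{1..l}. ?branch x j) = 0"
      by (intro sum.neutral) blast
    then show ?thesis
      using False Tp_outside_branches[OF False] by simp
  qed
  then have "T = (\<lambda>x. (\<Sum>j\<in>{1..l}. ?branch x j) + indicator (- {0..<1}) x)"
    by (intro ext)
  also have "\<dots> \<in> borel_measurable borel"
    by measurable
  finally show ?thesis .
qed

lemma cyl_Nil: "cyl p l nj [] = UNIV"
  by (simp add: cyl_def)

lemma cyl_Cons: "cyl p l nj (j # e) = Iv p nj j \<inter> T -` cyl p l nj e"
proof -
  have "(T ^^ Suc i) -` X = T -` ((T ^^ i) -` X)" for i X
    by (simp only: funpow_Suc_right vimage_comp)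
  then show ?thesis
    unfolding cyl_def by (simp add: lessThan_Suc_eq_insert_0 vimage_INT)
qed

lemma cyl_append_subset: "cyl p l nj (e @ e') \<subseteq> cyl p l nj e"
proof
  fix x assume x: "x \<in> cyl p l nj (e @ e')"
  have "(T ^^ i) x \<in> Iv p nj (e ! i)" if "i < length e" for i
  proof -
    have "(T ^^ i) x \<in> Iv p nj ((e @ e') ! i)"
      using x that unfolding cyl_def by simp
    with that show ?thesis
      by (simp add: nth_append)
  qed
  then show "x \<in> cyl p l nj e"
    unfolding cyl_def by simp
qed

lemma cyl_measurable: "cyl p l nj e \<in> sets borel"
  unfolding cyl_def
proof (rule sets.countable_INT'')
  show "(T ^^ i) -` Iv p nj (e ! i) \<in> sets borel" for i
    by (rule measurable_sets_borel[OF measurable_compose_n[OF Tp_measurable]]) (simp add: Iv_def)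
qed auto

definition padic_cell :: "nat \<Rightarrow> nat \<Rightarrow> real set" where
  "padic_cell t d = {real d / real p ^ t <..< (real d + 1) / real p ^ t}"

lemma padic_cell_nonempty: "padic_cell t d \<noteq> {}"
proof -
  have "real d / real p ^ t < (real d + 1) / real p ^ t"
    using p_pos by (simp add: divide_strict_right_mono)
  then show ?thesis
    by (simp add: padic_cell_def)
qed

lemma padic_cell_open: "open (padic_cell t d)"
  by (simp add: padic_cell_def)

lemma branch_interior_disjoint:
  assumes "j \<in> {1..l}" "j' \<in> {1..l}" "j' \<noteq> j"
  shows "{a (j - 1)<..<a j} \<inter> Iv p nj j' = {}"
proof -
  consider "j' < j" | "j < j'"
    using assms by linarith
  then show ?thesis
  proof cases
    case 1
    then have "a j' \<le> a (j - 1)" by (intro aend_mono) auto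
    then show ?thesis by (auto simp: Iv_def)
  next
    case 2
    then have "a j \<le> a (j' - 1)" by (intro aend_mono) auto
    then show ?thesis by (auto simp: Iv_def)
  qed
qed

lemma Tp_image_padic_cell:
  assumes j: "j \<in> {1..l}" "nj j \<le> t" and B: "a (j - 1) * real p ^ t = real B" "B \<le> d"
    and sub: "padic_cell t d \<subseteq> {a (j - 1)<..<a j}"
  shows "T ` padic_cell t d = padic_cell (t - nj j) (d - B)"
proof -
  define s where "s = t - nj j"
  have ps: "real p ^ nj j > 0" "real p ^ s > 0"
    using p_pos by simp_all
  have ts: "real p ^ t = real p ^ nj j * real p ^ s"
    using j(2) by (simp add: s_def flip: power_add)
  have aB: "a (j - 1) = real B / (real p ^ nj j * real p ^ s)"
    using B(1) ts ps by (simp add: eq_divide_eq)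
  have rescale: "real p ^ nj j * (x / real p ^ t - a (j - 1)) = (x - real B) / real p ^ s" for x
    unfolding aB ts using ps by (simp add: field_simps)
  have "T ` padic_cell t d = (\<lambda>x. real p ^ nj j * (x - a (j - 1))) ` padic_cell t d"
    using sub Tp_on_branch[OF j(1)] by (intro image_cong) auto
  also have "\<dots> = padic_cell s (d - B)"
    unfolding padic_cell_def affine_image_Ioo[OF ps(1)] rescale using B(2)
    by (simp add: of_nat_diff diff_add_eq)
  finally show ?thesis
    by (simp add: s_def)
qed

lemma padic_cell_image:
  assumes t: "nmax \<le> t" and d: "d < p ^ t"
  obtains j d' where "j \<in> {1..l}" "d' < p ^ (t - nj j)"
    "padic_cell t d \<subseteq> {a (j - 1)<..<a j}" "T ` padic_cell t d = padic_cell (t - nj j) d'"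
proof -
  have pt: "real p ^ t > 0"
    using p_pos by simp
  have "real d / real p ^ t < 1"
    using d pt by (simp add: divide_less_eq flip: of_nat_power)
  then obtain j where j: "j \<in> {1..l}" "a (j - 1) \<le> real d / real p ^ t" "real d / real p ^ t < a j"
    using branch_exists by (metis divide_nonneg_nonneg of_nat_0_le_iff zero_le_power)
  define s where "s = t - nj j"
  obtain B :: nat where B: "a (j - 1) * real p ^ t = real B" "a j * real p ^ t = real B + real p ^ s"
    using aend_grid[OF j(1) t] unfolding s_def .
  have "real B \<le> real d" "real d < real B + real p ^ s"
    using j(2,3) B pt by (simp_all add: pos_le_divide_eq pos_divide_less_eq)
  then have Bd: "B \<le> d" and dB: "d + 1 \<le> B + p ^ s"
    by (simp_all flip: of_nat_power)
  have d': "d - B < p ^ s"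
    using Bd dB by auto
  have "(real d + 1) / real p ^ t \<le> a j"
    using dB B(2) pt by (simp add: pos_divide_le_eq flip: of_nat_power)
  then have sub: "padic_cell t d \<subseteq> {a (j - 1)<..<a j}"
    using j(2) by (auto simp: padic_cell_def)
  have "nj j \<le> t"
    using nj_le_nmax[OF j(1)] t by simp
  with d' show ?thesis
    by (intro that[OF j(1) _ sub Tp_image_padic_cell[OF j(1) _ B(1) Bd sub]]) (simp_all add: s_def)
qed

lemma cyl_Cons_superset:
  assumes "S \<subseteq> {a (j - 1)<..<a j}" "T ` S \<subseteq> cyl p l nj f"
  shows "S \<subseteq> cyl p l nj (j # f)"
  using assms by (auto simp: cyl_Cons Iv_def)

lemma cyl_Cons_disjoint:
  assumes S: "S \<subseteq> {a (j - 1)<..<a j}" and ij: "i \<in> {1..l}" "j \<in> {1..l}"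
    and "i \<noteq> j \<or> T ` S \<inter> cyl p l nj f = {}"
  shows "S \<inter> cyl p l nj (i # f) = {}"
  using assms(4)
proof
  assume "i \<noteq> j"
  then have "S \<inter> Iv p nj i = {}"
    using branch_interior_disjoint[OF ij(2,1)] S by blast
  then show ?thesis
    by (auto simp: cyl_Cons)
qed (auto simp: cyl_Cons)

lemma padic_cell_in_unique_cyl:
  assumes "nmax * m \<le> t" "d < p ^ t"
  shows "\<exists>e\<in>words l m. padic_cell t d \<subseteq> cyl p l nj e \<and>
           (\<forall>e'\<in>words l m. e' \<noteq> e \<longrightarrow> padic_cell t d \<inter> cyl p l nj e' = {})"
  using assms
proof (induction m arbitrary: t d)
  case 0
  then show ?case
    by (simp add: words_0 cyl_Nil)
next
  case (Suc m)
  have "nmax \<le> t"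
    using Suc.prems(1) by simp
  then obtain j d' where j: "j \<in> {1..l}" and d': "d' < p ^ (t - nj j)"
    and sub: "padic_cell t d \<subseteq> {a (j - 1)<..<a j}"
    and img: "T ` padic_cell t d = padic_cell (t - nj j) d'"
    using Suc.prems(2) by (rule padic_cell_image)
  have "nmax * m \<le> t - nj j"
    using Suc.prems(1) nj_le_nmax[OF j] by simp
  then obtain e where e: "e \<in> words l m" "padic_cell (t - nj j) d' \<subseteq> cyl p l nj e"
    and e_unique: "\<forall>e'\<in>words l m. e' \<noteq> e \<longrightarrow> padic_cell (t - nj j) d' \<inter> cyl p l nj e' = {}"
    using Suc.IH[OF _ d'] by blast
  show ?case
  proof (intro bexI conjI ballI impI)
    show "j # e \<in> words l (Suc m)"
      using j e(1) by (simp add: Cons_in_words_Suc)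
    show "padic_cell t d \<subseteq> cyl p l nj (j # e)"
      using sub e(2) img by (intro cyl_Cons_superset) auto
    fix e'' assume "e'' \<in> words l (Suc m)" "e'' \<noteq> j # e"
    then obtain i f where "e'' = i # f" "i \<in> {1..l}" "f \<in> words l m" "i \<noteq> j \<or> f \<noteq> e"
      by (cases e'') (auto simp: words_def)
    then show "padic_cell t d \<inter> cyl p l nj e'' = {}"
      using cyl_Cons_disjoint[OF sub _ j] e_unique img by auto
  qed
qed

lemma padic_cell_cyl_dichotomy:
  assumes "nmax * m \<le> t" "d < p ^ t" "e \<in> words l m"
  shows "padic_cell t d \<subseteq> cyl p l nj e \<or> padic_cell t d \<inter> cyl p l nj e = {}"
proof -
  obtain e0 where "e0 \<in> words l m" "padic_cell t d \<subseteq> cyl p l nj e0"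
    and "\<forall>e'\<in>words l m. e' \<noteq> e0 \<longrightarrow> padic_cell t d \<inter> cyl p l nj e' = {}"
    using padic_cell_in_unique_cyl[OF assms(1,2)] by blast
  then show ?thesis
    using assms(3) by (cases "e = e0") auto
qed

lemma Max_slopes: "Max ((\<lambda>j. real p ^ nj j) ` {1..l}) = real p ^ nmax"
proof -
  have "mono (\<lambda>m::nat. real p ^ m)"
    using p_ge_2 by (intro monoI power_increasing) auto
  then have "real p ^ nmax = Max ((\<lambda>m. real p ^ m) ` nj ` {1..l})"
    unfolding nmax_def using l_pos by (intro mono_Max_commute) auto
  then show ?thesis
    by (simp add: image_image)
qed

lemma floor_ln_ratio_eq_div:
  "\<lfloor>ln (real (p ^ k)) / ln (Max ((\<lambda>j. real p ^ nj j) ` {1..l}))\<rfloor> = int (k div nmax)"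
proof -
  have "ln (real p) > 0"
    using p_ge_2 by simp
  then have "ln (real (p ^ k)) / ln (Max ((\<lambda>j. real p ^ nj j) ` {1..l})) = real k / real nmax"
    unfolding Max_slopes using p_pos nmax_pos by (simp add: ln_realpow)
  then show ?thesis
    by (simp add: floor_divide_of_nat_eq)
qed

end

section \<open>Cylinder masses of an eigenvector\<close>

locale quantized_full_branch_map = full_branch_map +
  fixes k :: nat and U :: "nat \<Rightarrow> nat \<Rightarrow> complex" and \<psi> :: "nat \<Rightarrow> complex"
  assumes quantization: "is_quantization p l nj (p ^ k) U"
    and eigenvector: "is_normalized_eigenvector (p ^ k) U \<psi>"
begin

abbreviation "N \<equiv> p ^ k"
abbreviation "mass e \<equiv> measure (mu_of N \<psi>) (cyl p l nj e)"
abbreviation "w i \<equiv> (cmod (\<psi> i))\<^sup>2"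

lemma padic_cell_index:
  "i \<ge> 1 \<Longrightarrow> {(real i - 1) / real N <..< real i / real N} = padic_cell k (i - 1)"
  by (simp add: padic_cell_def of_nat_diff)

lemma Ecell_eq_closure:
  assumes "i \<ge> 1"
  shows "Ecell N i = closure (padic_cell k (i - 1))"
proof -
  have "(real i - 1) / real N < real i / real N"
    using p_pos by (simp add: divide_strict_right_mono)
  then show ?thesis
    unfolding Ecell_def padic_cell_index[OF assms, symmetric] by simp
qed

definition cells_in :: "nat list \<Rightarrow> nat set" where
  "cells_in e = {i\<in>{1..N}. padic_cell k (i - 1) \<subseteq> cyl p l nj e}"

lemma cell_in_unique_cyl:
  assumes "nmax * m \<le> k" "i \<in> {1..N}"
  shows "\<exists>e\<in>words l m. padic_cell k (i - 1) \<subseteq> cyl p l nj e \<and>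
           (\<forall>e'\<in>words l m. e' \<noteq> e \<longrightarrow> padic_cell k (i - 1) \<inter> cyl p l nj e' = {})"
  using assms by (intro padic_cell_in_unique_cyl) auto

lemma cells_in_disjoint:
  assumes "nmax * m \<le> k" "e \<in> words l m" "e' \<in> words l m" "e \<noteq> e'"
  shows "cells_in e \<inter> cells_in e' = {}"
proof (rule ccontr)
  assume "cells_in e \<inter> cells_in e' \<noteq> {}"
  then obtain i where i: "i \<in> {1..N}" and sub: "padic_cell k (i - 1) \<subseteq> cyl p l nj e"
    and sub': "padic_cell k (i - 1) \<subseteq> cyl p l nj e'"
    unfolding cells_in_def by blast
  obtain e0 where "e0 \<in> words l m"
    and unique: "\<forall>e''\<in>words l m. e'' \<noteq> e0 \<longrightarrow> padic_cell k (i - 1) \<inter> cyl p l nj e'' = {}"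
    using cell_in_unique_cyl[OF assms(1) i] by blast
  have "e'' = e0" if "e'' \<in> words l m" "padic_cell k (i - 1) \<subseteq> cyl p l nj e''" for e''
    using unique that padic_cell_nonempty[of k "i - 1"] by (metis Int_absorb2)
  then show False
    using assms(2-4) sub sub' by blast
qed

lemma mass_eq_sum_cells:
  assumes "nmax * m \<le> k" "e \<in> words l m"
  shows "mass e = (\<Sum>i\<in>cells_in e. w i)"
proof -
  have "mass e = (\<Sum>i\<in>{i\<in>{1..N}. {(real i - 1) / real N <..< real i / real N} \<subseteq> cyl p l nj e}. w i)"
  proof (rule measure_mu_of_cell_union)
    fix i assume i: "i \<in> {1..N}"
    then have "i - 1 < p ^ k"
      by auto
    then have "padic_cell k (i - 1) \<subseteq> cyl p l nj e \<or> padic_cell k (i - 1) \<inter> cyl p l nj e = {}"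
      by (rule padic_cell_cyl_dichotomy[OF assms(1) _ assms(2)])
    then show "{(real i - 1) / real N <..< real i / real N} \<subseteq> cyl p l nj e \<or>
        {(real i - 1) / real N <..< real i / real N} \<inter> cyl p l nj e = {}"
      using padic_cell_index[of i] i by auto
  qed (use p_pos cyl_measurable in auto)
  also have "{i\<in>{1..N}. {(real i - 1) / real N <..< real i / real N} \<subseteq> cyl p l nj e} = cells_in e"
    unfolding cells_in_def using padic_cell_index by (intro Collect_cong conj_cong refl) auto
  finally show ?thesis .
qed

lemma mass_Nil: "mass [] = 1"
proof -
  have "cells_in [] = {1..N}"
    by (auto simp: cells_in_def cyl_Nil)
  then show ?thesis
    using mass_eq_sum_cells[of 0 "[]"] eigenvector
    by (simp add: words_0 is_normalized_eigenvector_def)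
qed

lemma sum_mass_eq_sum_cells:
  assumes "nmax * Suc m \<le> k" "\<And>j. j \<in> {1..l} \<Longrightarrow> f j \<in> words l (Suc m)" "inj_on f {1..l}"
  shows "(\<Sum>j\<in>{1..l}. mass (f j)) = (\<Sum>i\<in>(\<Union>j\<in>{1..l}. cells_in (f j)). w i)"
proof -
  have "(\<Sum>j\<in>{1..l}. mass (f j)) = (\<Sum>j\<in>{1..l}. \<Sum>i\<in>cells_in (f j). w i)"
    using assms(1,2) by (intro sum.cong refl mass_eq_sum_cells) auto
  also have "\<dots> = (\<Sum>i\<in>(\<Union>j\<in>{1..l}. cells_in (f j)). w i)"
  proof (rule sum.UNION_disjoint[symmetric])
    show "\<forall>j\<in>{1..l}. finite (cells_in (f j))"
      by (simp add: cells_in_def)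
    show "\<forall>j\<in>{1..l}. \<forall>j'\<in>{1..l}. j \<noteq> j' \<longrightarrow> cells_in (f j) \<inter> cells_in (f j') = {}"
    proof (intro ballI impI)
      fix j j' assume "j \<in> {1..l}" "j' \<in> {1..l}" "j \<noteq> j'"
      then show "cells_in (f j) \<inter> cells_in (f j') = {}"
        using assms(2) inj_onD[OF assms(3)] by (intro cells_in_disjoint[OF assms(1)]) auto
    qed
  qed simp
  finally show ?thesis .
qed

lemma sum_mass_snoc:
  assumes "nmax * Suc m \<le> k" "e \<in> words l m"
  shows "(\<Sum>j\<in>{1..l}. mass (e @ [j])) = mass e"
proof -
  have words: "e @ [j] \<in> words l (Suc m)" if "j \<in> {1..l}" for j
    using assms(2) that by (auto simp: words_def)
  have "(\<Union>j\<in>{1..l}. cells_in (e @ [j])) = cells_in e"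
  proof (intro equalityI subsetI)
    fix i assume "i \<in> cells_in e"
    then have i: "i \<in> {1..N}" and sub: "padic_cell k (i - 1) \<subseteq> cyl p l nj e"
      by (auto simp: cells_in_def)
    obtain e' where e': "e' \<in> words l (Suc m)" "padic_cell k (i - 1) \<subseteq> cyl p l nj e'"
      using cell_in_unique_cyl[OF assms(1) i] by blast
    then obtain e0 j where e0: "e' = e0 @ [j]" "e0 \<in> words l m" "j \<in> {1..l}"
      by (cases e' rule: rev_cases) (auto simp: words_def)
    have "padic_cell k (i - 1) \<subseteq> cyl p l nj e0"
      using e' e0(1) cyl_append_subset by blast
    then have "e0 = e"
      using cells_in_disjoint[of m e0 e] assms e0(2) i sub
      by (auto simp: cells_in_def)
    with e' e0 i show "i \<in> (\<Union>j\<in>{1..l}. cells_in (e @ [j]))"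
      by (auto simp: cells_in_def)
  qed (use cyl_append_subset in \<open>auto simp: cells_in_def\<close>)
  then show ?thesis
    using sum_mass_eq_sum_cells[OF assms(1) words] mass_eq_sum_cells[OF _ assms(2)] assms(1)
    by (simp add: inj_on_def)
qed

text \<open>\<open>U i c \<noteq> 0\<close> means \<open>B(c, i) > 0\<close>: a part of cell \<open>c\<close> of positive measure is mapped into cell \<open>i\<close>.\<close>
lemma quantization_support:
  assumes i: "i \<in> {1..N}" and c: "c \<in> {1..N}" and k: "nmax \<le> k" and U: "U i c \<noteq> 0"
  shows "padic_cell k (i - 1) \<inter> T ` padic_cell k (c - 1) \<noteq> {}"
proof
  assume disjoint: "padic_cell k (i - 1) \<inter> T ` padic_cell k (c - 1) = {}"
  have "c - 1 < p ^ k"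
    using c by auto
  then obtain j d' where "j \<in> {1..l}" "d' < p ^ (k - nj j)"
    "padic_cell k (c - 1) \<subseteq> {a (j - 1)<..<a j}" "T ` padic_cell k (c - 1) = padic_cell (k - nj j) d'"
    by (rule padic_cell_image[OF k])
  then have "open (T ` padic_cell k (c - 1))"
    by (simp add: padic_cell_open)
  moreover have "T ` padic_cell k (c - 1) \<inter> padic_cell k (i - 1) = {}"
    using disjoint by blast
  ultimately have "T ` padic_cell k (c - 1) \<inter> closure (padic_cell k (i - 1)) = {}"
    by (simp only: open_Int_closure_eq_empty)
  then have "T ` padic_cell k (c - 1) \<inter> Ecell N i = {}"
    using Ecell_eq_closure[of i] i by simp
  then have "Ecell N c \<inter> {x. T x \<in> Ecell N i} \<subseteq> Ecell N c - padic_cell k (c - 1)"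
    by blast
  also have "\<dots> \<subseteq> {(real c - 1) / real N, real c / real N}"
    using padic_cell_index[of c] c by (auto simp: Ecell_def)
  finally have "Bmat p l nj N c i = 0"
    unfolding Bmat_def by (simp add: measure_lebesgue_subset_finite)
  moreover have "Bmat p l nj N c i = (cmod (U i c))\<^sup>2"
    using quantization i c unfolding is_quantization_def by blast
  ultimately show False
    using U by simp
qed

definition cells_mapped_into :: "nat list \<Rightarrow> nat set" where
  "cells_mapped_into e = {c\<in>{1..N}. T ` padic_cell k (c - 1) \<subseteq> cyl p l nj e}"

lemma cells_mapped_into_eq_Union:
  assumes k: "nmax \<le> k"
  shows "cells_mapped_into e = (\<Union>j\<in>{1..l}. cells_in (j # e))"
proof (intro equalityI subsetI)
  fix c assume "c \<in> cells_mapped_into e"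
  then have c: "c \<in> {1..N}" "c - 1 < p ^ k" and img: "T ` padic_cell k (c - 1) \<subseteq> cyl p l nj e"
    by (auto simp: cells_mapped_into_def)
  obtain j d' where "j \<in> {1..l}" "d' < p ^ (k - nj j)"
    "padic_cell k (c - 1) \<subseteq> {a (j - 1)<..<a j}" "T ` padic_cell k (c - 1) = padic_cell (k - nj j) d'"
    by (rule padic_cell_image[OF k c(2)])
  then have "c \<in> cells_in (j # e)"
    using c img by (auto simp: cells_in_def cyl_Cons Iv_def)
  with \<open>j \<in> {1..l}\<close> show "c \<in> (\<Union>j\<in>{1..l}. cells_in (j # e))"
    by blast
qed (auto simp: cells_mapped_into_def cells_in_def cyl_Cons)

lemma quantization_zero_outside_cells_in:
  assumes lev: "nmax * Suc m \<le> k" and e: "e \<in> words l m"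
    and i: "i \<in> {1..N} - cells_in e" and c: "c \<in> cells_mapped_into e"
  shows "U i c = 0"
proof (rule ccontr)
  assume "U i c \<noteq> 0"
  then have "padic_cell k (i - 1) \<inter> cyl p l nj e \<noteq> {}"
    using quantization_support[of i c] lev i c by (auto simp: cells_mapped_into_def)
  moreover have "i - 1 < p ^ k"
    using i by auto
  ultimately show False
    using padic_cell_cyl_dichotomy[of m k "i - 1" e] lev e i by (auto simp: cells_in_def)
qed

lemma quantization_zero_outside_cells_mapped_into:
  assumes lev: "nmax * Suc m \<le> k" and e: "e \<in> words l m"
    and i: "i \<in> cells_in e" and c: "c \<in> {1..N} - cells_mapped_into e"
  shows "U i c = 0"
proof (rule ccontr)
  assume "U i c \<noteq> 0"
  then have meet: "padic_cell k (i - 1) \<inter> T ` padic_cell k (c - 1) \<noteq> {}"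
    using quantization_support[of i c] lev i c by (auto simp: cells_in_def)
  have k: "nmax \<le> k" and "c - 1 < p ^ k"
    using lev c by auto
  then obtain j d' where j: "j \<in> {1..l}" "d' < p ^ (k - nj j)"
    "padic_cell k (c - 1) \<subseteq> {a (j - 1)<..<a j}" "T ` padic_cell k (c - 1) = padic_cell (k - nj j) d'"
    by (rule padic_cell_image)
  have "nmax * m \<le> k - nj j"
    using lev nj_le_nmax[OF j(1)] by simp
  then have "padic_cell (k - nj j) d' \<inter> cyl p l nj e = {}"
    using padic_cell_cyl_dichotomy[OF _ j(2) e] c j(4) by (auto simp: cells_mapped_into_def)
  then show False
    using meet i j(4) by (auto simp: cells_in_def)
qed

lemma sum_mass_Cons:
  assumes lev: "nmax * Suc m \<le> k" and e: "e \<in> words l m"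
  shows "(\<Sum>j\<in>{1..l}. mass (j # e)) = mass e"
proof -
  have "mass e = (\<Sum>i\<in>cells_in e. w i)"
    using lev by (intro mass_eq_sum_cells[OF _ e]) simp
  also have "\<dots> = (\<Sum>c\<in>cells_mapped_into e. w c)"
  proof (rule eigenvector_mass_block[OF _ eigenvector])
    show "\<forall>i\<in>{1..N}. \<forall>j\<in>{1..N}. (\<Sum>k\<in>{1..N}. cnj (U k i) * U k j) = (if i = j then 1 else 0)"
      using quantization unfolding is_quantization_def by blast
  qed (use quantization_zero_outside_cells_in[OF lev e] quantization_zero_outside_cells_mapped_into[OF lev e]
       in \<open>auto simp: cells_in_def cells_mapped_into_def\<close>)
  also have "\<dots> = (\<Sum>j\<in>{1..l}. mass (j # e))"
    using sum_mass_eq_sum_cells[OF lev] cells_mapped_into_eq_Union[of e] lev e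
    by (simp add: inj_on_def Cons_in_words_Suc)
  finally show ?thesis ..
qed

lemma mass_stationary: "stationary_word_weights l (k div nmax) (\<lambda>e. mass e)"
proof
  have len: "nmax * Suc m \<le> k" if "m < k div nmax" for m
    using that nmax_pos less_eq_div_iff_mult_less_eq[of nmax "Suc m" k] by (simp add: mult.commute)
  show "(\<Sum>j\<in>{1..l}. mass (e @ [j])) = mass e" if "e \<in> words l m" "m < k div nmax" for e m
    using sum_mass_snoc[OF len that(1)] that(2) .
  show "(\<Sum>j\<in>{1..l}. mass (j # e)) = mass e" if "e \<in> words l m" "m < k div nmax" for e m
    using sum_mass_Cons[OF len that(1)] that(2) .
qed (simp_all add: mass_Nil)

lemma pressure_iterate:
  assumes "q * n + r \<le> k div nmax"
  shows "pressure p l nj (mu_of N \<psi>) (q * n + r)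
           \<le> real q * pressure p l nj (mu_of N \<psi>) n + pressure p l nj (mu_of N \<psi>) r"
  unfolding pressure_eq_word_pressure
  using p_pos by (intro stationary_word_weights.word_pressure_iterate[OF mass_stationary assms])
    (simp_all add: vw_pos vw_append)

end

theorem proposition4:
  fixes p l k q n r :: nat and nj :: "nat \<Rightarrow> nat"
    and U :: "nat \<Rightarrow> nat \<Rightarrow> complex" and \<psi> :: "nat \<Rightarrow> complex"
  assumes "p \<ge> 2" and "l \<ge> 1"
    and "\<forall>j\<in>{1..l}. nj j \<ge> 1"
    and "(\<Sum>j\<in>{1..l}. 1 / real p ^ nj j) = 1"
    and "is_quantization p l nj (p ^ k) U"
    and "is_normalized_eigenvector (p ^ k) U \<psi>"
    and "q \<ge> 1" and "n \<ge> 1" and "r < n"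
    and "int (q * n + r) =
           \<lfloor>ln (real (p ^ k)) / ln (Max ((\<lambda>j. real p ^ nj j) ` {1..l}))\<rfloor>"
  shows "pressure p l nj (mu_of (p ^ k) \<psi>) (q * n + r)
           \<le> real q * pressure p l nj (mu_of (p ^ k) \<psi>) n
             + pressure p l nj (mu_of (p ^ k) \<psi>) r"
proof -
  interpret quantized_full_branch_map p l nj k U \<psi>
    by unfold_locales (use assms in auto)
  have "q * n + r = k div nmax"
    using assms(10)[unfolded floor_ln_ratio_eq_div] by (simp only: of_nat_eq_iff)
  then show ?thesis
    by (intro pressure_iterate) simp
qed

end
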